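(* For all integers $0\le a<t\le T$, \[ \sum_{b=a}^{t-1}(\gamma\lambda)^{b-a}\,\delta'_{a,b}=G_a^{\lambda\mid t}-g(h_a;\theta_{a-1}), \] where for $a\le b\le T-1$, $\delta'_{a,b}=\frac{\partial L_{b+1}}{\partial h_a}+\gamma\, g(h_{b+1};\theta_b)^\top\frac{\partial h_{b+1}}{\partial h_a}-g(h_b;\theta_{b-1})^\top\frac{\partial h_b}{\partial h_a}$.
   Context: Fix integers $d,p,T\ge1$. Hidden states $h_0,\dots,h_T\in\mathbb{R}^d$ are produced by a recurrent network $h_t=f(x_t,h_{t-1})$ with $f$ differentiable and inputs fixed; losses $L_t=\ell_t(h_t)$, $1\le t\le T$, with $\ell_t$ differentiable. For $0\le s\le\tau\le T$, $\partial h_\tau/\partial h_s\in\mathbb{R}^{d\times d}$ is the Jacobian of $h_\tau$ as a function of $h_s$ through the recursion (identity if $\tau=s$); for $s<\tau$, $\partial L_\tau/\partial h_s\in\mathbb{R}^d$ is the gradient of $L_\tau$ as a function of $h_s$; for $v\in\mathbb{R}^d$, $v^\top\partial h_\tau/\partial h_s$ means $(\partial h_\tau/\partial h_s)^\top v$. Let $g:\mathbb{R}^d\times\mathbb{R}^p\to\mathbb{R}^d$ be any map (the synthesiser), $\gamma,\lambda\in[0,1]$, and let $\theta_{-1},\theta_0,\dots,\theta_{T-1}\in\mathbb{R}^p$ be an arbitrary sequence of weight vectors. Convention $0^0=1$. The $n$-step synthetic gradient, for $k\ge0$, $n\ge1$, $k+n\le T$, is $G_k^{(n)}=\sum_{\tau=1}^{n}\gamma^{\tau-1}\frac{\partial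 L_{k+\tau}}{\partial h_k}+\gamma^n g(h_{k+n};\theta_{k+n-1})^\top\frac{\partial h_{k+n}}{\partial h_k}$, and the interim $\lambda$-weighted synthetic gradient, for $0\le k<H\le T$, is $G_k^{\lambda\mid H}=(1-\lambda)\sum_{n=1}^{H-k-1}\lambda^{n-1}G_k^{(n)}+\lambda^{H-k-1}G_k^{(H-k)}$. An empty sum is zero. *)

theory Defs
  imports "HOL-Analysis.Analysis"
begin

text \<open>Vectors in R^d are modelled as real^'d (d = CARD('d) \<ge> 1), weights as real^'p.
  The recurrent map is f :: real^'m \<Rightarrow> real^'d \<Rightarrow> real^'d (input, previous state),
  inputs x :: nat \<Rightarrow> real^'m (x t used at step t \<ge> 1), initial state h0.\<close>

primrec hstate :: "('x \<Rightarrow> real^'d \<Rightarrow> real^'d) \<Rightarrow> (nat \<Rightarrow> 'x) \<Rightarrow> real^'d \<Rightarrow> nat \<Rightarrow> real^'d" where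
  "hstate f x h0 0 = h0"
| "hstate f x h0 (Suc t) = f (x (Suc t)) (hstate f x h0 t)"

text \<open>flow f x s tau h: the state at time tau as a function of the state h at time s
  (through the recursion); identity if tau \<le> s.\<close>
primrec flow :: "('x \<Rightarrow> real^'d \<Rightarrow> real^'d) \<Rightarrow> (nat \<Rightarrow> 'x) \<Rightarrow> nat \<Rightarrow> nat \<Rightarrow> real^'d \<Rightarrow> real^'d" where
  "flow f x s 0 h = h"
| "flow f x s (Suc tau) h = (if Suc tau \<le> s then h else f (x (Suc tau)) (flow f x s tau h))"

text \<open>Jacobian dh_tau/dh_s (a d x d matrix), evaluated at the actual state h_s.\<close>
definition jac :: "('x \<Rightarrow> real^'d \<Rightarrow> real^'d) \<Rightarrow> (nat \<Rightarrow> 'x) \<Rightarrow> real^'d \<Rightarrow> nat \<Rightarrow> nat \<Rightarrow> real^'d^'d" where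
  "jac f x h0 tau s = matrix (frechet_derivative (flow f x s tau) (at (hstate f x h0 s)))"

text \<open>Gradient dL_tau/dh_s of L_tau = l tau (h_tau) as a function of h_s.\<close>
definition gradL :: "('x \<Rightarrow> real^'d \<Rightarrow> real^'d) \<Rightarrow> (nat \<Rightarrow> 'x) \<Rightarrow> real^'d \<Rightarrow> (nat \<Rightarrow> real^'d \<Rightarrow> real)
    \<Rightarrow> nat \<Rightarrow> nat \<Rightarrow> real^'d" where
  "gradL f x h0 l tau s = (\<chi> i. frechet_derivative (\<lambda>h. l tau (flow f x s tau h))
      (at (hstate f x h0 s)) (axis i 1))"

text \<open>theta :: int \<Rightarrow> real^'p, so that theta (-1), theta 0, ... are available.
  v^T (dh_tau/dh_s) is written  v v* J.\<close>

definition Gn :: "('x \<Rightarrow> real^'d \<Rightarrow> real^'d) \<Rightarrow> (nat \<Rightarrow> 'x) \<Rightarrow> real^'d \<Rightarrow> (nat \<Rightarrow> real^'d \<Rightarrow> real)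
    \<Rightarrow> (real^'d \<Rightarrow> real^'p \<Rightarrow> real^'d) \<Rightarrow> (int \<Rightarrow> real^'p) \<Rightarrow> real \<Rightarrow> nat \<Rightarrow> nat \<Rightarrow> real^'d" where
  "Gn f x h0 l g \<theta> \<gamma> k n =
     (\<Sum>tau = 1..n. \<gamma> ^ (tau - 1) *\<^sub>R gradL f x h0 l (k + tau) k)
     + \<gamma> ^ n *\<^sub>R (g (hstate f x h0 (k + n)) (\<theta> (int (k + n) - 1)) v* jac f x h0 (k + n) k)"

definition Glam :: "('x \<Rightarrow> real^'d \<Rightarrow> real^'d) \<Rightarrow> (nat \<Rightarrow> 'x) \<Rightarrow> real^'d \<Rightarrow> (nat \<Rightarrow> real^'d \<Rightarrow> real)
    \<Rightarrow> (real^'d \<Rightarrow> real^'p \<Rightarrow> real^'d) \<Rightarrow> (int \<Rightarrow> real^'p) \<Rightarrow> real \<Rightarrow> real \<Rightarrow> nat \<Rightarrow> nat \<Rightarrow> real^'d" where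
  "Glam f x h0 l g \<theta> \<gamma> lam k H =
     (1 - lam) *\<^sub>R (\<Sum>n = 1..H - k - 1. lam ^ (n - 1) *\<^sub>R Gn f x h0 l g \<theta> \<gamma> k n)
     + lam ^ (H - k - 1) *\<^sub>R Gn f x h0 l g \<theta> \<gamma> k (H - k)"

definition delta' :: "('x \<Rightarrow> real^'d \<Rightarrow> real^'d) \<Rightarrow> (nat \<Rightarrow> 'x) \<Rightarrow> real^'d \<Rightarrow> (nat \<Rightarrow> real^'d \<Rightarrow> real)
    \<Rightarrow> (real^'d \<Rightarrow> real^'p \<Rightarrow> real^'d) \<Rightarrow> (int \<Rightarrow> real^'p) \<Rightarrow> real \<Rightarrow> nat \<Rightarrow> nat \<Rightarrow> real^'d" where
  "delta' f x h0 l g \<theta> \<gamma> a b =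
     gradL f x h0 l (b + 1) a
     + \<gamma> *\<^sub>R (g (hstate f x h0 (b + 1)) (\<theta> (int b)) v* jac f x h0 (b + 1) a)
     - g (hstate f x h0 b) (\<theta> (int b - 1)) v* jac f x h0 b a"

end

theory Submission
  imports Defs
begin

text \<open>Fix the start time a and write D n = dL(a+n)/dh(a) and J n = g(h(a+n); \<theta>(a+n-1))^T dh(a+n)/dh(a).
  Then the n-step gradient is G(n) = (\<Sum>\<tau>=1..n. \<gamma>^(\<tau>-1) D \<tau>) + \<gamma>^n J n, and with
  \<delta>'(a,a+n) = D (n+1) + \<gamma> J (n+1) - J n we get G(n+1) - G(n) = \<gamma>^n \<delta>'(a,a+n). Summing these
  differences with weights \<lambda>^n telescopes the \<lambda>-weighted gradient down to J 0, and
  J 0 = g(h(a); \<theta>(a-1)) because the Jacobian of h(a) with respect to itself is the identity.\<close>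

lemma flow_eq_self: "tau \<le> s \<Longrightarrow> flow f x s tau h = h"
  by (induction tau) auto

lemma jac_same_time: "jac f x h0 s s = mat 1"
proof -
  have "flow f x s s = id"
    using flow_eq_self[of s s f x] by auto
  then show ?thesis
    unfolding jac_def by (simp add: matrix_id_mat_1)
qed

lemma n_step_return_Suc_diff:
  fixes D J G :: "nat \<Rightarrow> 'a::real_vector"
  assumes G: "\<And>n. G n = (\<Sum>tau = 1..n. \<gamma> ^ (tau - 1) *\<^sub>R D tau) + \<gamma> ^ n *\<^sub>R J n"
  shows "G (Suc n) - G n = \<gamma> ^ n *\<^sub>R (D (Suc n) + \<gamma> *\<^sub>R J (Suc n) - J n)"
  unfolding G by (simp add: algebra_simps)

lemma lambda_return_telescope:
  fixes D J G :: "nat \<Rightarrow> 'a::real_vector"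
  assumes G: "\<And>n. G n = (\<Sum>tau = 1..n. \<gamma> ^ (tau - 1) *\<^sub>R D tau) + \<gamma> ^ n *\<^sub>R J n"
  shows "(\<Sum>m\<le>N. (\<gamma> * lam) ^ m *\<^sub>R (D (Suc m) + \<gamma> *\<^sub>R J (Suc m) - J m))
     = (1 - lam) *\<^sub>R (\<Sum>n = 1..N. lam ^ (n - 1) *\<^sub>R G n) + lam ^ N *\<^sub>R G (Suc N) - J 0"
proof (induction N)
  case 0
  then show ?case by (simp add: G)
next
  case (Suc N)
  have step: "(\<gamma> * lam) ^ Suc N *\<^sub>R (D (Suc (Suc N)) + \<gamma> *\<^sub>R J (Suc (Suc N)) - J (Suc N))
      = lam ^ Suc N *\<^sub>R (G (Suc (Suc N)) - G (Suc N))"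
    by (simp add: n_step_return_Suc_diff[OF G] power_mult_distrib)
  have "(\<Sum>m\<le>Suc N. (\<gamma> * lam) ^ m *\<^sub>R (D (Suc m) + \<gamma> *\<^sub>R J (Suc m) - J m))
      = (1 - lam) *\<^sub>R (\<Sum>n = 1..N. lam ^ (n - 1) *\<^sub>R G n) + lam ^ N *\<^sub>R G (Suc N) - J 0
        + lam ^ Suc N *\<^sub>R (G (Suc (Suc N)) - G (Suc N))"
    by (simp only: sum.atMost_Suc Suc.IH step)
  then show ?case
    by (simp add: algebra_simps)
qed

theorem lemma4:
  fixes f :: "real^'m \<Rightarrow> real^'d \<Rightarrow> real^'d" and x :: "nat \<Rightarrow> real^'m" and h0 :: "real^'d"
    and l :: "nat \<Rightarrow> real^'d \<Rightarrow> real" and g :: "real^'d \<Rightarrow> real^'p \<Rightarrow> real^'d"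
    and \<theta> :: "int \<Rightarrow> real^'p" and \<gamma> lam :: real and T a t :: nat
  assumes "T \<ge> 1"
    and "\<And>u v. (\<lambda>z. f (fst z) (snd z)) differentiable (at (u, v))"
    and "\<And>tau y. 1 \<le> tau \<Longrightarrow> tau \<le> T \<Longrightarrow> l tau differentiable (at y)"
    and "0 \<le> \<gamma>" "\<gamma> \<le> 1" "0 \<le> lam" "lam \<le> 1"
    and "a < t" "t \<le> T"
  shows "(\<Sum>b = a..t - 1. (\<gamma> * lam) ^ (b - a) *\<^sub>R delta' f x h0 l g \<theta> \<gamma> a b)
         = Glam f x h0 l g \<theta> \<gamma> lam a t - g (hstate f x h0 a) (\<theta> (int a - 1))"
proof -
  define D where "D n = gradL f x h0 l (a + n) a" for n
  define J where "J n = g (hstate f x h0 (a + n)) (\<theta> (int (a + n) - 1)) v* jac f x h0 (a + n) a" for n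
  define N where "N = t - a - 1"
  have t: "t = a + Suc N"
    using \<open>a < t\<close> unfolding N_def by simp
  have G: "Gn f x h0 l g \<theta> \<gamma> a n = (\<Sum>tau = 1..n. \<gamma> ^ (tau - 1) *\<^sub>R D tau) + \<gamma> ^ n *\<^sub>R J n" for n
    unfolding Gn_def D_def J_def by simp
  have delta': "delta' f x h0 l g \<theta> \<gamma> a (a + m) = D (Suc m) + \<gamma> *\<^sub>R J (Suc m) - J m" for m
    unfolding delta'_def D_def J_def by (simp add: algebra_simps)
  have J0: "J 0 = g (hstate f x h0 a) (\<theta> (int a - 1))"
    unfolding J_def by (simp add: jac_same_time)
  have "(\<Sum>b = a..t - 1. (\<gamma> * lam) ^ (b - a) *\<^sub>R delta' f x h0 l g \<theta> \<gamma> a b)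
      = (\<Sum>m\<le>N. (\<gamma> * lam) ^ m *\<^sub>R delta' f x h0 l g \<theta> \<gamma> a (a + m))"
    using sum.atLeastAtMost_shift_0[of a "t - 1" "\<lambda>b. (\<gamma> * lam) ^ (b - a) *\<^sub>R delta' f x h0 l g \<theta> \<gamma> a b"] t
    by (simp add: atLeast0AtMost)
  also have "\<dots> = (1 - lam) *\<^sub>R (\<Sum>n = 1..N. lam ^ (n - 1) *\<^sub>R Gn f x h0 l g \<theta> \<gamma> a n)
      + lam ^ N *\<^sub>R Gn f x h0 l g \<theta> \<gamma> a (Suc N) - J 0"
    unfolding delta' by (rule lambda_return_telescope[OF G])
  also have "\<dots> = Glam f x h0 l g \<theta> \<gamma> lam a t - g (hstate f x h0 a) (\<theta> (int a - 1))"
    unfolding Glam_def J0 t by simp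
  finally show ?thesis .
qed

end
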